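(* The polynomials $Q_A,R_A\in\mathbb Q[p,d]$ are nonzero at every point of $\Sigma_A^\circ:=\{(p,d):\tfrac12<p<1,\ 0<d<\tfrac12\}$, and the polynomials $Q_B,R_B\in\mathbb Q[p,d,e]$ are nonzero at every point of $\Sigma_B^\circ:=\{(p,d,e):\tfrac12<p<1,\ d>0,\ e>0,\ d+e<\tfrac12\}$, where \begin{align*} Q_A={}&8d^4-8d^3p+2d^3-48d^2p^2+22d^2p-3d^2-8dp^3+22dp^2-6dp+8p^4+2p^3-3p^2,\\ R_A={}&8d^4-2d^3-24d^2p^2+6d^2p-d^2+10dp^2-2dp+2p^3-p^2,\\ Q_B={}&8d^4+32d^3e-8d^3p+2d^3+40d^2e^2-56d^2ep+16d^2e-48d^2p^2+22d^2p-3d^2\\ &+16de^3-72de^2p+26de^2-72dep^2+44dep-6de-8dp^3+22dp^2-6dp\\ &-24e^3p+12e^3-32e^2p^2+22e^2p-3e^2+12ep^2-6ep+8p^4+2p^3-3p^2,\\ R_B={}&8d^4+32d^3e-2d^3+40d^2e^2-24d^2ep-24d^2p^2+6d^2p-d^2\\ &+16de^3-32de^2p+6de^2-24dep^2+12dep-2de+10dp^2-2dp\\ &-8e^3p+4e^3-8e^2p^2+6e^2p-e^2+4ep^2-2ep+2p^3-p^2. \end{align*} Moreover, the branch maps $F_0^A,F_1^A$ are $C^\infty$ on $\Sigma_A^\circ$ and $F_0^B,F_1^B$ are $C^\infty$ on $\Sigma_B^\circ$.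
   Context: Let $$L_A=\begin{pmatrix}1&1&-1&-1\\-1&1&1&1\\1&-1&-1&1\\1&-1&1&-1\end{pmatrix},\qquad L_B=\begin{pmatrix}1&1&-1&-1\\-1&1&1&1\\1&-1&-1&1\\1&-1&1&-1\\1&-1&1&1\end{pmatrix}.$$ For a sign matrix $L$ and a distribution $u$ on its rows, the one-step AdaBoost update using column $j$ is $u'_i=u_i/(1+\mu L_{ij})$ with $\mu=(u^\top L)_j$. Chart coordinates: $(p,d)$ corresponds to the distribution $(p-\tfrac12,\,1-p,\,\tfrac12-d,\,d)$ on the rows of $L_A$, and $(p,d,e)$ corresponds to $(p-\tfrac12,\,1-p,\,\tfrac12-d-e,\,d,\,e)$ on the rows of $L_B$. For $G\in\{A,B\}$, the branch map $F_0^G$ is the composition of the five one-step updates on $L_G$ using columns $1,3,4,1,2$ in this order, and $F_1^G$ the composition using columns $1,4,3,1,2$, each applied to the distribution given by the chart coordinates and with the output (whose first two entries sum to $\tfrac12$) expressed again in chart coordinates. The polynomials $Q_A$ and $R_A$ are the reduced denominators of the first and second chart coordinates of $F_0^A$, and $Q_B,R_B$ are the reduced denominators of the coordinates of $F_0^B$ (with $R_B$ the common denominator of its second and third coordinates). *)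

theory Defs
  imports "HOL-Analysis.Analysis"
begin

text \<open>So D [v1,...,vk] x is the k-th Frechet
  derivative of f at x applied to (vk,...,v1).\<close>

definition C_infinity_on :: "'a::real_normed_vector set \<Rightarrow> ('a \<Rightarrow> 'b::real_normed_vector) \<Rightarrow> bool" where
  "C_infinity_on S f \<longleftrightarrow>
     (\<exists>D :: 'a list \<Rightarrow> 'a \<Rightarrow> 'b.
        (\<forall>x\<in>S. D [] x = f x) \<and>
        (\<forall>vs. \<forall>x\<in>S. (D vs has_derivative (\<lambda>v. D (v # vs) x)) (at x)) \<and>
        (\<forall>vs. continuous_on S (D vs)))"

definition LA :: "real list list" where
  "LA = [[1,1,-1,-1],[-1,1,1,1],[1,-1,-1,1],[1,-1,1,-1]]"

definition LB :: "real list list" where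
  "LB = [[1,1,-1,-1],[-1,1,1,1],[1,-1,-1,1],[1,-1,1,-1],[1,-1,1,1]]"

definition entry :: "real list list \<Rightarrow> nat \<Rightarrow> nat \<Rightarrow> real" where
  "entry L i j = L ! (i - 1) ! (j - 1)"

definition ada_step :: "real list list \<Rightarrow> nat \<Rightarrow> (nat \<Rightarrow> real) \<Rightarrow> (nat \<Rightarrow> real)" where
  "ada_step L j u =
     (let \<mu> = (\<Sum>i=1..length L. u i * entry L i j)
      in (\<lambda>i. u i / (1 + \<mu> * entry L i j)))"

definition ada_steps :: "real list list \<Rightarrow> nat list \<Rightarrow> (nat \<Rightarrow> real) \<Rightarrow> (nat \<Rightarrow> real)" where
  "ada_steps L js u = fold (\<lambda>j v. ada_step L j v) js u"

definition chartA :: "real \<times> real \<Rightarrow> (nat \<Rightarrow> real)" where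
  "chartA x = (case x of (p, d) \<Rightarrow> (\<lambda>i. [p - 1/2, 1 - p, 1/2 - d, d] ! (i - 1)))"

definition unchartA :: "(nat \<Rightarrow> real) \<Rightarrow> real \<times> real" where
  "unchartA u = (1 - u 2, u 4)"

definition chartB :: "real \<times> real \<times> real \<Rightarrow> (nat \<Rightarrow> real)" where
  "chartB x = (case x of (p, d, e) \<Rightarrow> (\<lambda>i. [p - 1/2, 1 - p, 1/2 - d - e, d, e] ! (i - 1)))"

definition unchartB :: "(nat \<Rightarrow> real) \<Rightarrow> real \<times> real \<times> real" where
  "unchartB u = (1 - u 2, u 4, u 5)"

definition F0A :: "real \<times> real \<Rightarrow> real \<times> real" where
  "F0A x = unchartA (ada_steps LA [1,3,4,1,2] (chartA x))"

definition F1A :: "real \<times> real \<Rightarrow> real \<times> real" where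
  "F1A x = unchartA (ada_steps LA [1,4,3,1,2] (chartA x))"

definition F0B :: "real \<times> real \<times> real \<Rightarrow> real \<times> real \<times> real" where
  "F0B x = unchartB (ada_steps LB [1,3,4,1,2] (chartB x))"

definition F1B :: "real \<times> real \<times> real \<Rightarrow> real \<times> real \<times> real" where
  "F1B x = unchartB (ada_steps LB [1,4,3,1,2] (chartB x))"

definition SigmaA :: "(real \<times> real) set" where
  "SigmaA = {(p, d). 1/2 < p \<and> p < 1 \<and> 0 < d \<and> d < 1/2}"

definition SigmaB :: "(real \<times> real \<times> real) set" where
  "SigmaB = {(p, d, e). 1/2 < p \<and> p < 1 \<and> 0 < d \<and> 0 < e \<and> d + e < 1/2}"

definition QA :: "real \<Rightarrow> real \<Rightarrow> real" where
  "QA p d = 8*d^4 - 8*d^3*p + 2*d^3 - 48*d^2*p^2 + 22*d^2*p - 3*d^2 - 8*d*p^3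
            + 22*d*p^2 - 6*d*p + 8*p^4 + 2*p^3 - 3*p^2"

definition RA :: "real \<Rightarrow> real \<Rightarrow> real" where
  "RA p d = 8*d^4 - 2*d^3 - 24*d^2*p^2 + 6*d^2*p - d^2 + 10*d*p^2 - 2*d*p + 2*p^3 - p^2"

definition QB :: "real \<Rightarrow> real \<Rightarrow> real \<Rightarrow> real" where
  "QB p d e = 8*d^4 + 32*d^3*e - 8*d^3*p + 2*d^3 + 40*d^2*e^2 - 56*d^2*e*p + 16*d^2*e
              - 48*d^2*p^2 + 22*d^2*p - 3*d^2
              + 16*d*e^3 - 72*d*e^2*p + 26*d*e^2 - 72*d*e*p^2 + 44*d*e*p - 6*d*e
              - 8*d*p^3 + 22*d*p^2 - 6*d*p
              - 24*e^3*p + 12*e^3 - 32*e^2*p^2 + 22*e^2*p - 3*e^2 + 12*e*p^2 - 6*e*p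
              + 8*p^4 + 2*p^3 - 3*p^2"

definition RB :: "real \<Rightarrow> real \<Rightarrow> real \<Rightarrow> real" where
  "RB p d e = 8*d^4 + 32*d^3*e - 2*d^3 + 40*d^2*e^2 - 24*d^2*e*p - 24*d^2*p^2 + 6*d^2*p - d^2
              + 16*d*e^3 - 32*d*e^2*p + 6*d*e^2 - 24*d*e*p^2 + 12*d*e*p - 2*d*e
              + 10*d*p^2 - 2*d*p
              - 8*e^3*p + 4*e^3 - 8*e^2*p^2 + 6*e^2*p - e^2 + 4*e*p^2 - 2*e*p + 2*p^3 - p^2"

end

theory Submission
  imports Defs
begin

(* The branch maps are compositions of AdaBoost updates u_i / (1 + mu L_ij) with L_ij = +-1.
   For a positive distribution u and a column containing both signs, the edge mu lies strictly
   between -1 and 1, so all denominators are positive and the update is again a positive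
   distribution.  The charts map the open simplices affinely onto positive distributions, hence
   every coordinate of a branch map is a rational function without poles on the simplex; such
   functions are closed under directional derivatives and therefore C-infinity.

   The four polynomials are positive on the simplices: rewritten in the barycentric coordinates
   x = p - 1/2, y = 1 - p, z = 1/2 - d (- e), w = d (, t = e) and homogenised using
   x + y = z + w (+ t) = 1/2, all their coefficients are positive. *)

lemma C_infinity_on_if_derivatives_closed:
  fixes K :: "('a::real_normed_vector \<Rightarrow> 'b::real_normed_vector) set"
  assumes closed: "\<And>g. g \<in> K \<Longrightarrow>
      \<exists>g'. (\<forall>v. g' v \<in> K) \<and> (\<forall>x\<in>S. (g has_derivative (\<lambda>v. g' v x)) (at x))"
    and "f \<in> K"
  shows "C_infinity_on S f"
proof -
  obtain d where d_in: "\<And>g v. g \<in> K \<Longrightarrow> d g v \<in> K"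
    and d_deriv: "\<And>g x. g \<in> K \<Longrightarrow> x \<in> S \<Longrightarrow> (g has_derivative (\<lambda>v. d g v x)) (at x)"
    using closed by metis
  define D where "D = rec_list f (\<lambda>v _ g. d g v)"
  have D_Nil: "D [] = f" and D_Cons: "D (v # vs) = d (D vs) v" for v vs
    by (simp_all add: D_def)
  have D_in: "D vs \<in> K" for vs
    by (induction vs) (simp_all add: D_Nil D_Cons d_in \<open>f \<in> K\<close>)
  have "(D vs has_derivative (\<lambda>v. D (v # vs) x)) (at x)" if "x \<in> S" for vs x
    using d_deriv[OF D_in that] by (simp add: D_Cons)
  moreover from this have "continuous_on S (D vs)" for vs
    by (meson continuous_at_imp_continuous_on has_derivative_continuous)
  ultimately show ?thesis
    unfolding C_infinity_on_def by (intro exI[of _ D]) (simp add: D_Nil)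
qed

lemma C_infinity_on_Pair:
  assumes "C_infinity_on S f" and "C_infinity_on S g"
  shows "C_infinity_on S (\<lambda>x. (f x, g x))"
proof -
  obtain Df where "\<forall>x\<in>S. Df [] x = f x"
      "\<forall>vs. \<forall>x\<in>S. (Df vs has_derivative (\<lambda>v. Df (v # vs) x)) (at x)"
      "\<forall>vs. continuous_on S (Df vs)"
    using assms(1) unfolding C_infinity_on_def by blast
  moreover obtain Dg where "\<forall>x\<in>S. Dg [] x = g x"
      "\<forall>vs. \<forall>x\<in>S. (Dg vs has_derivative (\<lambda>v. Dg (v # vs) x)) (at x)"
      "\<forall>vs. continuous_on S (Dg vs)"
    using assms(2) unfolding C_infinity_on_def by blast
  ultimately show ?thesis
    unfolding C_infinity_on_def
    by (intro exI[of _ "\<lambda>vs x. (Df vs x, Dg vs x)"]) (auto intro!: has_derivative_Pair continuous_on_Pair)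
qed

inductive_set rational_on :: "'a::real_normed_vector set \<Rightarrow> ('a \<Rightarrow> real) set"
  for S :: "'a set" where
  const: "(\<lambda>x. c) \<in> rational_on S"
| linear: "bounded_linear l \<Longrightarrow> l \<in> rational_on S"
| add: "f \<in> rational_on S \<Longrightarrow> g \<in> rational_on S \<Longrightarrow> (\<lambda>x. f x + g x) \<in> rational_on S"
| mult: "f \<in> rational_on S \<Longrightarrow> g \<in> rational_on S \<Longrightarrow> (\<lambda>x. f x * g x) \<in> rational_on S"
| uminus: "f \<in> rational_on S \<Longrightarrow> (\<lambda>x. - f x) \<in> rational_on S"
| inverse: "f \<in> rational_on S \<Longrightarrow> (\<forall>x\<in>S. f x \<noteq> 0) \<Longrightarrow> (\<lambda>x. inverse (f x)) \<in> rational_on S"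

lemma rational_on_diff:
  "f \<in> rational_on S \<Longrightarrow> g \<in> rational_on S \<Longrightarrow> (\<lambda>x. f x - g x) \<in> rational_on S"
  using rational_on.add[OF _ rational_on.uminus] by simp

lemma rational_on_divide:
  "f \<in> rational_on S \<Longrightarrow> g \<in> rational_on S \<Longrightarrow> \<forall>x\<in>S. g x \<noteq> 0 \<Longrightarrow>
    (\<lambda>x. f x / g x) \<in> rational_on S"
  using rational_on.mult[OF _ rational_on.inverse] by (simp add: divide_inverse)

lemma rational_on_sum:
  "(\<And>i. i \<in> I \<Longrightarrow> f i \<in> rational_on S) \<Longrightarrow> (\<lambda>x. \<Sum>i\<in>I. f i x) \<in> rational_on S"
  by (induction I rule: infinite_finite_induct) (auto intro: rational_on.intros)

lemma rational_on_has_derivative: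
  assumes "f \<in> rational_on S"
  shows "\<exists>f'. (\<forall>v. f' v \<in> rational_on S) \<and> (\<forall>x\<in>S. (f has_derivative (\<lambda>v. f' v x)) (at x))"
  using assms
proof induction
  case (const c)
  show ?case by (intro exI[of _ "\<lambda>v x. 0"]) (simp add: rational_on.const)
next
  case (linear l)
  then show ?case
    by (intro exI[of _ "\<lambda>v x. l v"]) (simp add: rational_on.const bounded_linear_imp_has_derivative)
next
  case (add f g)
  then obtain f' g' where "\<forall>v. f' v \<in> rational_on S" "\<forall>x\<in>S. (f has_derivative (\<lambda>v. f' v x)) (at x)"
      "\<forall>v. g' v \<in> rational_on S" "\<forall>x\<in>S. (g has_derivative (\<lambda>v. g' v x)) (at x)"
    by blast
  then show ?case
    by (intro exI[of _ "\<lambda>v x. f' v x + g' v x"]) (auto intro: rational_on.add has_derivative_add)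
next
  case (mult f g)
  then obtain f' g' where "\<forall>v. f' v \<in> rational_on S" "\<forall>x\<in>S. (f has_derivative (\<lambda>v. f' v x)) (at x)"
      "\<forall>v. g' v \<in> rational_on S" "\<forall>x\<in>S. (g has_derivative (\<lambda>v. g' v x)) (at x)"
    by blast
  with mult.hyps show ?case
    by (intro exI[of _ "\<lambda>v x. f x * g' v x + f' v x * g x"])
      (auto intro!: rational_on.add rational_on.mult has_derivative_mult)
next
  case (uminus f)
  then obtain f' where "\<forall>v. f' v \<in> rational_on S" "\<forall>x\<in>S. (f has_derivative (\<lambda>v. f' v x)) (at x)"
    by blast
  then show ?case
    by (intro exI[of _ "\<lambda>v x. - f' v x"]) (auto intro: rational_on.uminus has_derivative_minus)
next
  case (inverse f)
  then obtain f' where "\<forall>v. f' v \<in> rational_on S" "\<forall>x\<in>S. (f has_derivative (\<lambda>v. f' v x)) (at x)"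
    by blast
  with inverse.hyps show ?case
    by (intro exI[of _ "\<lambda>v x. - (inverse (f x) * f' v x * inverse (f x))"])
      (auto intro!: rational_on.uminus rational_on.mult rational_on.inverse Deriv.has_derivative_inverse)
qed

lemma C_infinity_on_rational: "f \<in> rational_on S \<Longrightarrow> C_infinity_on S f"
  using C_infinity_on_if_derivatives_closed rational_on_has_derivative by blast

definition mixed_sign_column :: "real list list \<Rightarrow> nat \<Rightarrow> bool" where
  "mixed_sign_column L j \<longleftrightarrow> (\<forall>i\<in>{1..length L}. entry L i j \<in> {-1, 1})
     \<and> (\<exists>i\<in>{1..length L}. entry L i j = 1) \<and> (\<exists>i\<in>{1..length L}. entry L i j = -1)"

definition positive_distribution :: "nat \<Rightarrow> (nat \<Rightarrow> real) \<Rightarrow> bool" where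
  "positive_distribution n u \<longleftrightarrow> (\<forall>i\<in>{1..n}. 0 < u i) \<and> (\<Sum>i=1..n. u i) = 1"

lemma abs_edge_less_one:
  assumes "mixed_sign_column L j" and "positive_distribution (length L) u"
  shows "\<bar>\<Sum>i=1..length L. u i * entry L i j\<bar> < 1"
proof -
  let ?I = "{1..length L}"
  obtain k k' where k: "k \<in> ?I" "entry L k j = 1" and k': "k' \<in> ?I" "entry L k' j = -1"
    using assms(1) unfolding mixed_sign_column_def by blast
  have pos: "\<forall>i\<in>?I. 0 < u i" and total: "(\<Sum>i\<in>?I. u i) = 1"
    using assms(2) unfolding positive_distribution_def by auto
  have signs: "\<forall>i\<in>?I. entry L i j \<in> {-1, 1}"
    using assms(1) unfolding mixed_sign_column_def by blast
  have "(\<Sum>i\<in>?I. - u i) < (\<Sum>i\<in>?I. u i * entry L i j)"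
    by (rule sum_strict_mono_ex1) (use signs pos k in force)+
  moreover have "(\<Sum>i\<in>?I. u i * entry L i j) < (\<Sum>i\<in>?I. u i)"
    by (rule sum_strict_mono_ex1) (use signs pos k' in force)+
  ultimately show ?thesis
    using total by (simp add: sum_negf abs_less_iff)
qed

lemma ada_step_denominator_pos:
  assumes "mixed_sign_column L j" and "positive_distribution (length L) u" and "i \<in> {1..length L}"
  shows "0 < 1 + (\<Sum>k=1..length L. u k * entry L k j) * entry L i j"
proof -
  have "entry L i j = 1 \<or> entry L i j = -1"
    using assms(1,3) unfolding mixed_sign_column_def by blast
  then show ?thesis
    using abs_edge_less_one[OF assms(1,2)] by (auto simp: abs_less_iff)
qed

lemma positive_distribution_ada_step:
  assumes col: "mixed_sign_column L j" and u: "positive_distribution (length L) u"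
  shows "positive_distribution (length L) (ada_step L j u)"
proof -
  let ?I = "{1..length L}"
  define \<mu> where "\<mu> = (\<Sum>i\<in>?I. u i * entry L i j)"
  have step: "ada_step L j u i = u i / (1 + \<mu> * entry L i j)" for i
    by (simp add: ada_step_def \<mu>_def)
  have den: "0 < 1 + \<mu> * entry L i j" if "i \<in> ?I" for i
    using ada_step_denominator_pos[OF col u that] by (simp add: \<mu>_def)
  have "\<bar>\<mu>\<bar> < 1"
    using abs_edge_less_one[OF col u] by (simp add: \<mu>_def)
  then have "1 - \<mu>\<^sup>2 \<noteq> 0"
    using abs_square_less_1 by force
  \<comment> \<open>as \<open>s\<^sup>2 = 1\<close>, \<open>1 / (1 + \<mu> s) = (1 - \<mu> s) / (1 - \<mu>\<^sup>2)\<close>\<close>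
  have "ada_step L j u i = (u i - \<mu> * (u i * entry L i j)) / (1 - \<mu>\<^sup>2)" if "i \<in> ?I" for i
  proof -
    have "entry L i j = 1 \<or> entry L i j = -1"
      using col that unfolding mixed_sign_column_def by blast
    with den[OF that] \<open>1 - \<mu>\<^sup>2 \<noteq> 0\<close> show ?thesis
      by (auto simp: step field_simps power2_eq_square)
  qed
  then have "(\<Sum>i\<in>?I. ada_step L j u i) = (\<Sum>i\<in>?I. (u i - \<mu> * (u i * entry L i j)) / (1 - \<mu>\<^sup>2))"
    by (rule sum.cong[OF refl])
  also have "\<dots> = ((\<Sum>i\<in>?I. u i) - \<mu> * \<mu>) / (1 - \<mu>\<^sup>2)"
    by (simp add: sum_divide_distrib[symmetric] sum_subtractf sum_distrib_left[symmetric] \<mu>_def)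
  also have "\<dots> = 1"
    using u \<open>1 - \<mu>\<^sup>2 \<noteq> 0\<close> by (simp add: positive_distribution_def power2_eq_square)
  finally show ?thesis
    using u den unfolding positive_distribution_def by (simp add: step)
qed

lemma rational_on_ada_step:
  assumes coords: "\<And>i. i \<in> {1..length L} \<Longrightarrow> (\<lambda>x. U x i) \<in> rational_on S"
    and distr: "\<And>x. x \<in> S \<Longrightarrow> positive_distribution (length L) (U x)"
    and col: "mixed_sign_column L j" and i: "i \<in> {1..length L}"
  shows "(\<lambda>x. ada_step L j (U x) i) \<in> rational_on S"
  unfolding ada_step_def Let_def
proof (rule rational_on_divide)
  show "(\<lambda>x. 1 + (\<Sum>k=1..length L. U x k * entry L k j) * entry L i j) \<in> rational_on S"
    by (intro rational_on.add rational_on.mult rational_on.const rational_on_sum coords)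
  show "\<forall>x\<in>S. 1 + (\<Sum>k=1..length L. U x k * entry L k j) * entry L i j \<noteq> 0"
    using ada_step_denominator_pos[OF col distr i] by force
qed (rule coords[OF i])

lemma rational_on_ada_steps:
  assumes "\<And>i. i \<in> {1..length L} \<Longrightarrow> (\<lambda>x. U x i) \<in> rational_on S"
    and "\<And>x. x \<in> S \<Longrightarrow> positive_distribution (length L) (U x)"
    and "\<forall>j\<in>set js. mixed_sign_column L j" and "i \<in> {1..length L}"
  shows "(\<lambda>x. ada_steps L js (U x) i) \<in> rational_on S"
  using assms
proof (induction js arbitrary: U)
  case Nil
  then show ?case by (simp add: ada_steps_def)
next
  case (Cons j js)
  have "(\<lambda>x. ada_steps L js (ada_step L j (U x)) i) \<in> rational_on S"
    using Cons by (intro Cons.IH rational_on_ada_step positive_distribution_ada_step) auto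
  then show ?case by (simp add: ada_steps_def)
qed

lemma rows_LA: "{1..length LA} = {1, 2, 3, 4}"
  by (auto simp: LA_def)

lemma rows_LB: "{1..length LB} = {1, 2, 3, 4, 5}"
  by (auto simp: LB_def)

lemma mixed_sign_column_LA: "j \<in> {1, 2, 3, 4} \<Longrightarrow> mixed_sign_column LA j"
  unfolding mixed_sign_column_def rows_LA by (auto simp: entry_def LA_def)

lemma mixed_sign_column_LB: "j \<in> {1, 2, 3, 4} \<Longrightarrow> mixed_sign_column LB j"
  unfolding mixed_sign_column_def rows_LB by (auto simp: entry_def LB_def)

lemma rational_on_chartA: "i \<in> {1..length LA} \<Longrightarrow> (\<lambda>x. chartA x i) \<in> rational_on S"
  unfolding rows_LA
  by (auto simp: chartA_def case_prod_beta
      intro!: rational_on_diff rational_on.const rational_on.linear[OF bounded_linear_fst]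
        rational_on.linear[OF bounded_linear_snd])

lemma rational_on_chartB: "i \<in> {1..length LB} \<Longrightarrow> (\<lambda>x. chartB x i) \<in> rational_on S"
  unfolding rows_LB
  by (auto simp: chartB_def case_prod_beta
      intro!: rational_on_diff rational_on.const rational_on.linear[OF bounded_linear_fst]
        rational_on.linear[OF bounded_linear_fst_comp[OF bounded_linear_snd]]
        rational_on.linear[OF bounded_linear_snd_comp[OF bounded_linear_snd]])

lemma positive_distribution_chartA: "x \<in> SigmaA \<Longrightarrow> positive_distribution (length LA) (chartA x)"
  unfolding positive_distribution_def rows_LA by (auto simp: chartA_def SigmaA_def LA_def)

lemma positive_distribution_chartB: "x \<in> SigmaB \<Longrightarrow> positive_distribution (length LB) (chartB x)"
  unfolding positive_distribution_def rows_LB by (auto simp: chartB_def SigmaB_def LB_def)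

lemma C_infinity_on_branchA:
  assumes "\<forall>j\<in>set js. mixed_sign_column LA j"
  shows "C_infinity_on SigmaA (\<lambda>x. unchartA (ada_steps LA js (chartA x)))"
proof -
  have "(\<lambda>x. ada_steps LA js (chartA x) i) \<in> rational_on SigmaA" if "i \<in> {1..length LA}" for i
    using rational_on_chartA positive_distribution_chartA assms that by (rule rational_on_ada_steps)
  then show ?thesis
    unfolding unchartA_def rows_LA
    by (auto intro!: C_infinity_on_Pair C_infinity_on_rational rational_on_diff rational_on.const)
qed

lemma C_infinity_on_branchB:
  assumes "\<forall>j\<in>set js. mixed_sign_column LB j"
  shows "C_infinity_on SigmaB (\<lambda>x. unchartB (ada_steps LB js (chartB x)))"
proof -
  have "(\<lambda>x. ada_steps LB js (chartB x) i) \<in> rational_on SigmaB" if "i \<in> {1..length LB}" for i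
    using rational_on_chartB positive_distribution_chartB assms that by (rule rational_on_ada_steps)
  then show ?thesis
    unfolding unchartB_def rows_LB
    by (auto intro!: C_infinity_on_Pair C_infinity_on_rational rational_on_diff rational_on.const)
qed

lemma QA_pos:
  assumes "(p, d) \<in> SigmaA"
  shows "0 < QA p d"
proof -
  define x y z w where "x = p - 1/2" and "y = 1 - p" and "z = 1/2 - d" and "w = d"
  have "0 < x" "0 < y" "0 < z" "0 < w"
    using assms by (auto simp: SigmaA_def x_def y_def z_def w_def)
  then have "0 < 320*y^4*z^2*w^2 + 192*y^4*z^3*w + 1408*x*y^3*z*w^3 + 4288*x*y^3*z^2*w^2
      + 2688*x*y^3*z^3*w + 320*x*y^3*z^4 + 320*x^2*y^2*w^4 + 6720*x^2*y^2*z*w^3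
      + 15744*x^2*y^2*z^2*w^2 + 10304*x^2*y^2*z^3*w + 1728*x^2*y^2*z^4
      + 1088*x^3*y*w^4 + 11136*x^3*y*z*w^3 + 22976*x^3*y*z^2*w^2 + 15488*x^3*y*z^3*w
      + 3072*x^3*y*z^4 + 896*x^4*w^4 + 6336*x^4*z*w^3 + 11968*x^4*z^2*w^2
      + 8192*x^4*z^3*w + 1792*x^4*z^4"
    by (intro add_pos_pos mult_pos_pos zero_less_power) simp_all
  also have "\<dots> = QA p d"
    unfolding QA_def x_def y_def z_def w_def by algebra
  finally show ?thesis .
qed

lemma RA_pos:
  assumes "(p, d) \<in> SigmaA"
  shows "0 < RA p d"
proof -
  define x y z w where "x = p - 1/2" and "y = 1 - p" and "z = 1/2 - d" and "w = d"
  have "0 < x" "0 < y" "0 < z" "0 < w"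
    using assms by (auto simp: SigmaA_def x_def y_def z_def w_def)
  then have "0 < 320*y^4*z^2*w^2 + 192*y^4*z^3*w + 640*x*y^3*z*w^3 + 2624*x*y^3*z^2*w^2
      + 1536*x*y^3*z^3*w + 64*x*y^3*z^4 + 64*x^2*y^2*w^4 + 2624*x^2*y^2*z*w^3
      + 7296*x^2*y^2*z^2*w^2 + 4288*x^2*y^2*z^3*w + 320*x^2*y^2*z^4 + 192*x^3*y*w^4
      + 3584*x^3*y*z*w^3 + 8384*x^3*y*z^2*w^2 + 4992*x^3*y*z^3*w + 512*x^3*y*z^4
      + 128*x^4*w^4 + 1600*x^4*z*w^3 + 3392*x^4*z^2*w^2 + 2048*x^4*z^3*w + 256*x^4*z^4"
    by (intro add_pos_pos mult_pos_pos zero_less_power) simp_all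
  also have "\<dots> = RA p d"
    unfolding RA_def x_def y_def z_def w_def by algebra
  finally show ?thesis .
qed

lemma QB_pos:
  assumes "(p, d, e) \<in> SigmaB"
  shows "0 < QB p d e"
proof -
  define x y z w t where "x = p - 1/2" and "y = 1 - p" and "z = 1/2 - d - e" and "w = d" and "t = e"
  have "0 < x" "0 < y" "0 < z" "0 < w" "0 < t"
    using assms by (auto simp: SigmaB_def x_def y_def z_def w_def t_def)
  then have "0 < 448*y^4*z^2*w*t + 320*y^4*z^2*w^2 + 192*y^4*z^3*w + 1408*x*y^3*z*t^3
      + 4480*x*y^3*z*w*t^2 + 4480*x*y^3*z*w^2*t + 1408*x*y^3*z*w^3
      + 2752*x*y^3*z^2*t^2 + 7808*x*y^3*z^2*w*t + 4288*x*y^3*z^2*w^2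
      + 1664*x*y^3*z^3*t + 2688*x*y^3*z^3*w + 320*x*y^3*z^4 + 640*x^2*y^2*t^4
      + 2368*x^2*y^2*w*t^3 + 3136*x^2*y^2*w^2*t^2 + 1728*x^2*y^2*w^3*t
      + 320*x^2*y^2*w^4 + 7424*x^2*y^2*z*t^3 + 22592*x^2*y^2*z*w*t^2
      + 21888*x^2*y^2*z*w^2*t + 6720*x^2*y^2*z*w^3 + 13504*x^2*y^2*z^2*t^2
      + 30912*x^2*y^2*z^2*w*t + 15744*x^2*y^2*z^2*w^2 + 8448*x^2*y^2*z^3*t
      + 10304*x^2*y^2*z^3*w + 1728*x^2*y^2*z^4 + 1856*x^3*y*t^4 + 6912*x^3*y*w*t^3
      + 9344*x^3*y*w^2*t^2 + 5376*x^3*y*w^3*t + 1088*x^3*y*w^4 + 12928*x^3*y*z*t^3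
      + 38272*x^3*y*z*w*t^2 + 36480*x^3*y*z*w^2*t + 11136*x^3*y*z*w^3
      + 22208*x^3*y*z^2*t^2 + 46720*x^3*y*z^2*w*t + 22976*x^3*y*z^2*w^2
      + 14208*x^3*y*z^3*t + 15488*x^3*y*z^3*w + 3072*x^3*y*z^4 + 1344*x^4*t^4
      + 5056*x^4*w*t^3 + 6976*x^4*w^2*t^2 + 4160*x^4*w^3*t + 896*x^4*w^4
      + 7424*x^4*z*t^3 + 21696*x^4*z*w*t^2 + 20608*x^4*z*w^2*t + 6336*x^4*z*w^3
      + 12224*x^4*z^2*t^2 + 24704*x^4*z^2*w*t + 11968*x^4*z^2*w^2 + 7936*x^4*z^3*t
      + 8192*x^4*z^3*w + 1792*x^4*z^4"
    by (intro add_pos_pos mult_pos_pos zero_less_power) simp_all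
  also have "\<dots> = QB p d e"
    unfolding QB_def x_def y_def z_def w_def t_def by algebra
  finally show ?thesis .
qed

lemma RB_pos:
  assumes "(p, d, e) \<in> SigmaB"
  shows "0 < RB p d e"
proof -
  define x y z w t where "x = p - 1/2" and "y = 1 - p" and "z = 1/2 - d - e" and "w = d" and "t = e"
  have "0 < x" "0 < y" "0 < z" "0 < w" "0 < t"
    using assms by (auto simp: SigmaB_def x_def y_def z_def w_def t_def)
  then have "0 < 448*y^4*z^2*w*t + 320*y^4*z^2*w^2 + 192*y^4*z^3*w + 384*x*y^3*z*t^3
      + 1664*x*y^3*z*w*t^2 + 1920*x*y^3*z*w^2*t + 640*x*y^3*z*w^3 + 704*x*y^3*z^2*t^2
      + 4096*x*y^3*z^2*w*t + 2624*x*y^3*z^2*w^2 + 384*x*y^3*z^3*t + 1536*x*y^3*z^3*w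
      + 64*x*y^3*z^4 + 128*x^2*y^2*t^4 + 576*x^2*y^2*w*t^3 + 832*x^2*y^2*w^2*t^2
      + 448*x^2*y^2*w^3*t + 64*x^2*y^2*w^4 + 1792*x^2*y^2*z*t^3 + 7232*x^2*y^2*z*w*t^2
      + 8064*x^2*y^2*z*w^2*t + 2624*x^2*y^2*z*w^3 + 3136*x^2*y^2*z^2*t^2
      + 12096*x^2*y^2*z^2*w*t + 7296*x^2*y^2*z^2*w^2 + 1792*x^2*y^2*z^3*t
      + 4288*x^2*y^2*z^3*w + 320*x^2*y^2*z^4 + 320*x^3*y*t^4 + 1408*x^3*y*w*t^3
      + 2048*x^3*y*w^2*t^2 + 1152*x^3*y*w^3*t + 192*x^3*y*w^4 + 2688*x^3*y*z*t^3
      + 10240*x^3*y*z*w*t^2 + 11136*x^3*y*z*w^2*t + 3584*x^3*y*z*w^3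
      + 4544*x^3*y*z^2*t^2 + 14464*x^3*y*z^2*w*t + 8384*x^3*y*z^2*w^2
      + 2688*x^3*y*z^3*t + 4992*x^3*y*z^3*w + 512*x^3*y*z^4 + 192*x^4*t^4
      + 832*x^4*w*t^3 + 1216*x^4*w^2*t^2 + 704*x^4*w^3*t + 128*x^4*w^4
      + 1280*x^4*z*t^3 + 4672*x^4*z*w*t^2 + 4992*x^4*z*w^2*t + 1600*x^4*z*w^3
      + 2112*x^4*z^2*t^2 + 6016*x^4*z^2*w*t + 3392*x^4*z^2*w^2 + 1280*x^4*z^3*t
      + 2048*x^4*z^3*w + 256*x^4*z^4"
    by (intro add_pos_pos mult_pos_pos zero_less_power) simp_all
  also have "\<dots> = RB p d e"
    unfolding RB_def x_def y_def z_def w_def t_def by algebra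
  finally show ?thesis .
qed

theorem lemma3:
  shows "(\<forall>(p, d)\<in>SigmaA. QA p d \<noteq> 0 \<and> RA p d \<noteq> 0)
       \<and> (\<forall>(p, d, e)\<in>SigmaB. QB p d e \<noteq> 0 \<and> RB p d e \<noteq> 0)
       \<and> C_infinity_on SigmaA F0A \<and> C_infinity_on SigmaA F1A
       \<and> C_infinity_on SigmaB F0B \<and> C_infinity_on SigmaB F1B"
proof (intro conjI)
  show "\<forall>(p, d)\<in>SigmaA. QA p d \<noteq> 0 \<and> RA p d \<noteq> 0"
    using QA_pos RA_pos by fastforce
  show "\<forall>(p, d, e)\<in>SigmaB. QB p d e \<noteq> 0 \<and> RB p d e \<noteq> 0"
    using QB_pos RB_pos by fastforce
  show "C_infinity_on SigmaA F0A" "C_infinity_on SigmaA F1A"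
    using C_infinity_on_branchA[of "[1, 3, 4, 1, 2]"] C_infinity_on_branchA[of "[1, 4, 3, 1, 2]"]
    by (simp_all add: F0A_def[abs_def] F1A_def[abs_def] mixed_sign_column_LA)
  show "C_infinity_on SigmaB F0B" "C_infinity_on SigmaB F1B"
    using C_infinity_on_branchB[of "[1, 3, 4, 1, 2]"] C_infinity_on_branchB[of "[1, 4, 3, 1, 2]"]
    by (simp_all add: F0B_def[abs_def] F1B_def[abs_def] mixed_sign_column_LB)
qed

end
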